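(* Let $\Omega$ be a bounded strictly convex domain in $\mathbb{R}^n$ with smooth boundary and let $\phi\in C^2(\overline \Omega)$ satisfy $\phi>0$ in $\Omega$, $\phi|_{\partial\Omega}=0$ and $\frac{\partial\phi}{\partial \nu}|_{\partial\Omega}<0$, where $\nu$ is the unit outward normal of $\Omega$. Let $f=-\log\phi$. Then there are positive constants $\delta_0$ and $c_0$ such that $$\nabla^2f(x)(X,X)\geq \frac{c_0\|X\|^2}{\phi(x)}$$ for any $x\in \Omega$ with $\phi(x)<\delta_0$ and any $X\in \mathbb{R}^n$. *)

theory Defs
  imports "HOL-Analysis.Analysis"
begin

text \<open>Iterated directional (Frechet) derivatives:
  dirderivs f [u1,...,uk] x = D^k f(x)(u1,...,uk).
  In particular dirderivs f [X,X] x is the Hessian form of f at x applied to (X,X).\<close>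
fun dirderivs :: "('a::real_normed_vector \<Rightarrow> real) \<Rightarrow> 'a list \<Rightarrow> 'a \<Rightarrow> real" where
  "dirderivs f [] = f"
| "dirderivs f (u # us) = (\<lambda>x. frechet_derivative (dirderivs f us) (at x) u)"

definition smooth_fun :: "('a::real_normed_vector \<Rightarrow> real) \<Rightarrow> bool" where
  "smooth_fun f \<longleftrightarrow> (\<forall>us x. dirderivs f us differentiable (at x))"

definition grad :: "('a::euclidean_space \<Rightarrow> real) \<Rightarrow> 'a \<Rightarrow> 'a" where
  "grad f x = (\<Sum>b\<in>Basis. frechet_derivative f (at x) b *\<^sub>R b)"

text \<open>Omega = {rho < 0} is a bounded strictly convex domain with smooth boundary,
  rho being a smooth defining function: nonvanishing gradient on {rho = 0}, and
  the second fundamental form (Hessian of rho on the tangent space) positive definite.\<close>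
definition smooth_strictly_convex_domain :: "('a::euclidean_space \<Rightarrow> real) \<Rightarrow> 'a set \<Rightarrow> bool" where
  "smooth_strictly_convex_domain \<rho> \<Omega> \<longleftrightarrow>
     smooth_fun \<rho> \<and> \<Omega> = {x. \<rho> x < 0} \<and> \<Omega> \<noteq> {} \<and> bounded \<Omega> \<and> connected \<Omega> \<and>
     (\<forall>p. \<rho> p = 0 \<longrightarrow> grad \<rho> p \<noteq> 0) \<and>
     (\<forall>p X. \<rho> p = 0 \<longrightarrow> X \<noteq> 0 \<longrightarrow> dirderivs \<rho> [X] p = 0 \<longrightarrow> dirderivs \<rho> [X, X] p > 0)"

definition outer_normal :: "('a::euclidean_space \<Rightarrow> real) \<Rightarrow> 'a \<Rightarrow> 'a" where
  "outer_normal \<rho> p = grad \<rho> p /\<^sub>R norm (grad \<rho> p)"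

definition extends_cont :: "'a::topological_space set \<Rightarrow> ('a \<Rightarrow> real) \<Rightarrow> bool" where
  "extends_cont \<Omega> h \<longleftrightarrow> (\<exists>g. continuous_on (closure \<Omega>) g \<and> (\<forall>x\<in>\<Omega>. g x = h x))"

definition C2_closure :: "'a::euclidean_space set \<Rightarrow> ('a \<Rightarrow> real) \<Rightarrow> bool" where
  "C2_closure \<Omega> \<phi> \<longleftrightarrow> continuous_on (closure \<Omega>) \<phi> \<and>
     (\<forall>x\<in>\<Omega>. \<phi> differentiable (at x)) \<and>
     (\<forall>u. \<forall>x\<in>\<Omega>. dirderivs \<phi> [u] differentiable (at x)) \<and>
     (\<forall>u. extends_cont \<Omega> (dirderivs \<phi> [u])) \<and>
     (\<forall>u v. extends_cont \<Omega> (dirderivs \<phi> [u, v]))"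

end

theory Submission
  imports Defs
begin

(* The Hessian of -log \<phi> is ((D\<phi> X)\<^sup>2 - \<phi> D\<^sup>2\<phi>(X,X)) / \<phi>\<^sup>2, so it suffices to bound the
   numerator below by c \<phi> |X|\<^sup>2 where \<phi> is small.  The first and second derivatives of \<phi> extend
   continuously to the closure, and compactness of closure \<Omega> \<times> (unit sphere) reduces this to a statement
   at the boundary: if p \<in> \<partial>\<Omega>, X \<noteq> 0 and D\<phi>(p) X = 0, then D\<^sup>2\<phi>(p)(X,X) < 0.
   As \<phi> vanishes on \<partial>\<Omega> and has negative normal derivative, such an X is tangent to \<partial>\<Omega>.  At depth s
   below p along the normal, strict convexity makes the line in direction X meet \<Omega> in a chord whose
   end points t1 < 0 < t2 satisfy -t1 t2 = O(s); \<phi> vanishes at both ends and is of order s at the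
   point on the normal, so interpolation yields points arbitrarily close to p where D\<^sup>2\<phi>(X,X) \<le> -\<kappa> for
   a fixed \<kappa> > 0. *)

section \<open>Calculus on the real line\<close>

lemma first_zero_after:
  fixes g :: "real \<Rightarrow> real"
  assumes "a \<le> b" "continuous_on {a..b} g" "g a < 0" "0 < g b"
  obtains t where "a < t" "t < b" "g t = 0" "\<And>s. a \<le> s \<Longrightarrow> s < t \<Longrightarrow> g s < 0"
proof -
  let ?Z = "{t \<in> {a..b}. g t = 0}"
  have "closed ?Z"
    using continuous_closed_preimage_constant[OF assms(2)] by simp
  then have "compact ({a..b} \<inter> ?Z)"
    by (intro compact_Int_closed) auto
  moreover have "{a..b} \<inter> ?Z = ?Z"
    by blast
  ultimately have "compact ?Z"
    by simp
  moreover have "?Z \<noteq> {}"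
    using IVT'[of g a 0 b] assms by (auto simp: less_imp_le)
  ultimately obtain t where t: "t \<in> ?Z" and least: "\<And>s. s \<in> ?Z \<Longrightarrow> t \<le> s"
    using compact_attains_inf by meson
  have "g s < 0" if s: "a \<le> s" "s < t" for s
  proof (rule ccontr)
    assume "\<not> g s < 0"
    moreover have "continuous_on {a..s} g"
      using continuous_on_subset[OF assms(2)] s t by simp
    ultimately obtain z where "a \<le> z" "z \<le> s" "g z = 0"
      using IVT'[of g a 0 s] s assms(3) by (auto simp: less_imp_le)
    then show False
      using least[of z] s t by simp
  qed
  moreover have "t \<noteq> a" "t \<noteq> b"
    using t assms(3,4) by auto
  ultimately show thesis
    using that t by force
qed

lemma taylor_quadratic_lower_bound:
  fixes g g' g'' :: "real \<Rightarrow> real"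
  assumes g': "\<And>s. \<bar>s\<bar> \<le> \<bar>t\<bar> \<Longrightarrow> (g has_real_derivative g' s) (at s)"
    and g'': "\<And>s. \<bar>s\<bar> \<le> \<bar>t\<bar> \<Longrightarrow> (g' has_real_derivative g'' s) (at s)"
    and lower: "\<And>s. \<bar>s\<bar> \<le> \<bar>t\<bar> \<Longrightarrow> m \<le> g'' s"
  shows "g 0 + g' 0 * t + m / 2 * t\<^sup>2 \<le> g t"
proof (cases "t = 0")
  case False
  define diff where "diff = (\<lambda>k::nat. if k = 0 then g else if k = 1 then g' else g'')"
  have "\<exists>s. (if t < 0 then t < s \<and> s < 0 else 0 < s \<and> s < t) \<and>
      g t = (\<Sum>k<2. diff k 0 / fact k * (t - 0) ^ k) + diff 2 s / fact 2 * (t - 0) ^ 2"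
    by (rule Taylor[of 2 diff g "-\<bar>t\<bar>" "\<bar>t\<bar>"])
      (use g' g'' False in \<open>auto simp: diff_def less_2_cases_iff abs_le_iff\<close>)
  then obtain s where between: "if t < 0 then t < s \<and> s < 0 else 0 < s \<and> s < t"
    and "g t = (\<Sum>k<2. diff k 0 / fact k * (t - 0) ^ k) + diff 2 s / fact 2 * (t - 0) ^ 2"
    by blast
  then have "g t = g 0 + g' 0 * t + g'' s / 2 * t\<^sup>2"
    by (simp add: diff_def numeral_2_eq_2)
  moreover have s: "\<bar>s\<bar> \<le> \<bar>t\<bar>"
    using between by (auto split: if_splits)
  ultimately show ?thesis
    using lower[OF s] by (simp add: mult_right_mono)
qed simp

lemma convex_chord_roots:
  fixes g g' g'' :: "real \<Rightarrow> real"
  assumes "0 < m" "0 < R"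
    and g': "\<And>t. \<bar>t\<bar> \<le> R \<Longrightarrow> (g has_real_derivative g' t) (at t)"
    and g'': "\<And>t. \<bar>t\<bar> \<le> R \<Longrightarrow> (g' has_real_derivative g'' t) (at t)"
    and lower: "\<And>t. \<bar>t\<bar> \<le> R \<Longrightarrow> m \<le> g'' t"
    and g0: "g 0 < 0" "- (m * R\<^sup>2 / 16) \<le> g 0" and g'0: "\<bar>g' 0\<bar> \<le> m * R / 4"
  obtains t1 t2 where "-R < t1" "t1 < 0" "0 < t2" "t2 < R" "g t1 = 0" "g t2 = 0"
    "\<And>t. t1 < t \<Longrightarrow> t < t2 \<Longrightarrow> g t < 0" "- (t1 * t2) * m \<le> - 2 * g 0"
proof -
  have quadratic: "g 0 + g' 0 * t + m / 2 * t\<^sup>2 \<le> g t" if "\<bar>t\<bar> \<le> R" for t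
    by (rule taylor_quadratic_lower_bound[where g'' = g'']) (use g' g'' lower that in auto)
  have ends: "0 < g t" if "\<bar>t\<bar> = R" for t
  proof -
    have "\<bar>g' 0 * t\<bar> \<le> m * R\<^sup>2 / 4"
      using mult_right_mono[OF g'0, of "\<bar>t\<bar>"] that \<open>0 < R\<close> by (simp add: abs_mult power2_eq_square mult.assoc)
    moreover have "t\<^sup>2 = R\<^sup>2"
      using power2_abs[of t] that by simp
    moreover have "0 < m * R\<^sup>2"
      using \<open>0 < m\<close> \<open>0 < R\<close> by simp
    ultimately show ?thesis
      using quadratic[of t] that g0(2) by (simp add: abs_le_iff)
  qed
  have cont: "continuous_on {-R..R} g"
  proof (rule DERIV_atLeastAtMost_imp_continuous_on)
    show "\<exists>y. DERIV g t :> y" if "-R \<le> t" "t \<le> R" for t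
      using g'[of t] that by (auto simp: abs_le_iff)
  qed
  obtain t2 where t2: "0 < t2" "t2 < R" "g t2 = 0" "\<And>s. 0 \<le> s \<Longrightarrow> s < t2 \<Longrightarrow> g s < 0"
    using first_zero_after[of 0 R g] continuous_on_subset[OF cont] ends[of R] g0(1) \<open>0 < R\<close>
    by auto
  obtain s1 where s1: "0 < s1" "s1 < R" "g (- s1) = 0" "\<And>s. 0 \<le> s \<Longrightarrow> s < s1 \<Longrightarrow> g (- s) < 0"
    using first_zero_after[of 0 R "\<lambda>s. g (- s)"] ends[of "-R"] g0(1) \<open>0 < R\<close>
      continuous_on_compose2[OF cont continuous_on_minus[OF continuous_on_id], of "{0..R}"]
    by auto
  have neg: "g t < 0" if "- s1 < t" "t < t2" for t
    using s1(4)[of "- t"] t2(4)[of t] that by (cases "t \<le> 0") auto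
  \<comment> \<open>Adding the quadratic minorant at both roots, weighted by t2 and s1, cancels the linear term.\<close>
  have "g 0 - g' 0 * s1 + m / 2 * s1\<^sup>2 \<le> 0" "g 0 + g' 0 * t2 + m / 2 * t2\<^sup>2 \<le> 0"
    using quadratic[of "- s1"] quadratic[of t2] s1 t2 by auto
  then have "t2 * (g 0 - g' 0 * s1 + m / 2 * s1\<^sup>2) + s1 * (g 0 + g' 0 * t2 + m / 2 * t2\<^sup>2) \<le> 0"
    using s1(1) t2(1) by (simp add: add_nonpos_nonpos mult_nonneg_nonpos)
  then have "(s1 + t2) * (g 0 + m / 2 * (s1 * t2)) \<le> 0"
    by (simp add: algebra_simps power2_eq_square add_divide_distrib)
  then have "g 0 + m / 2 * (s1 * t2) \<le> 0"
    using s1(1) t2(1) by (simp add: mult_le_0_iff)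
  then show thesis
    using that[of "- s1" t2] s1 t2 neg by (simp add: algebra_simps)
qed

lemma linear_interpolation_error:
  fixes h h' h'' :: "real \<Rightarrow> real"
  assumes "t1 < 0" "0 < t2" and cont: "continuous_on {t1..t2} h"
    and h': "\<And>t. t1 < t \<Longrightarrow> t < t2 \<Longrightarrow> (h has_real_derivative h' t) (at t)"
    and h'': "\<And>t. t1 < t \<Longrightarrow> t < t2 \<Longrightarrow> (h' has_real_derivative h'' t) (at t)"
    and "h t1 = 0" "h t2 = 0"
  obtains \<xi> where "t1 < \<xi>" "\<xi> < t2" "h'' \<xi> * (t1 * t2) = 2 * h 0"
proof -
  \<comment> \<open>Subtract the parabola through the three points and apply Rolle's theorem twice.\<close>
  define c where "c = h 0 / (t1 * t2)"
  have c: "c * (t1 * t2) = h 0"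
    using assms(1,2) by (simp add: c_def)
  define k where "k t = h t - c * (t - t1) * (t - t2)" for t
  define k' where "k' t = h' t - c * (2 * t - t1 - t2)" for t
  have k': "(k has_real_derivative k' t) (at t)" if "t1 < t" "t < t2" for t
    unfolding k_def k'_def
    by (rule derivative_eq_intros h' that refl | simp add: algebra_simps)+
  have k'': "(k' has_real_derivative h'' t - 2 * c) (at t)" if "t1 < t" "t < t2" for t
    unfolding k'_def
    by (rule derivative_eq_intros h'' that refl | simp add: algebra_simps)+
  have k_zero: "k t1 = 0" "k 0 = 0" "k t2 = 0"
    using assms(6,7) c by (simp_all add: k_def algebra_simps)
  have k_cont: "continuous_on {t1..t2} k"
    unfolding k_def by (intro continuous_intros cont)
  have k_diff: "k differentiable (at t)" if "t1 < t" "t < t2" for t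
    using k'[OF that] real_differentiable_def by blast
  have "continuous_on {t1..0} k" "continuous_on {0..t2} k"
    using k_cont assms(1,2) by (auto elim!: continuous_on_subset)
  then have "\<exists>a. t1 < a \<and> a < 0 \<and> DERIV k a :> 0" "\<exists>b. 0 < b \<and> b < t2 \<and> DERIV k b :> 0"
    using Rolle[OF assms(1), of k] Rolle[OF assms(2), of k] k_zero k_diff assms(1,2) by simp_all
  then obtain a b where "t1 < a" "a < 0" "DERIV k a :> 0" "0 < b" "b < t2" "DERIV k b :> 0"
    by blast
  then have ab: "t1 < a" "a < b" "b < t2" "k' a = 0" "k' b = 0"
    using DERIV_unique k' by (meson order.strict_trans)+
  have "continuous_on {a..b} k'"
    using k'' ab by (intro DERIV_atLeastAtMost_imp_continuous_on) (meson le_less_trans less_le_trans)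
  moreover have "k' differentiable (at t)" if "a < t" "t < b" for t
    using k''[of t] that ab real_differentiable_def by (meson order.strict_trans)
  ultimately obtain \<xi> where "a < \<xi>" "\<xi> < b" "DERIV k' \<xi> :> 0"
    using Rolle[OF ab(2), of k'] ab(4,5) by auto
  then have "t1 < \<xi>" "\<xi> < t2" "h'' \<xi> - 2 * c = 0"
    using DERIV_unique k'' ab by (meson order.strict_trans)+
  then show thesis
    using that[of \<xi>] ab c by (simp add: algebra_simps)
qed

lemma eventually_at_left_all_between:
  fixes a :: real
  assumes "\<forall>\<^sub>F t in at_left a. P t"
  shows "\<forall>\<^sub>F t in at_left a. \<forall>s. t \<le> s \<longrightarrow> s < a \<longrightarrow> P s"
  using assms unfolding eventually_at_left_field by (meson less_le_trans)

lemma eventually_at_left_mvt_lower_bound: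
  fixes f f' :: "real \<Rightarrow> real"
  assumes "f 0 = 0"
    and "\<forall>\<^sub>F t in at_left 0. continuous_on {t..0} f \<and> (f has_real_derivative f' t) (at t) \<and> f' t \<le> c"
  shows "\<forall>\<^sub>F t in at_left 0. c * t \<le> f t"
proof -
  obtain b where "b < 0" and b: "\<And>t. b < t \<Longrightarrow> t < 0 \<Longrightarrow>
      continuous_on {t..0} f \<and> (f has_real_derivative f' t) (at t) \<and> f' t \<le> c"
    using assms(2) unfolding eventually_at_left_field by blast
  have "c * t \<le> f t" if t: "b < t" "t < 0" for t
  proof -
    have "\<And>z. t < z \<Longrightarrow> z < 0 \<Longrightarrow> f differentiable (at z)"
      using b t real_differentiable_def by (meson order.strict_trans)
    then obtain l z where z: "t < z" "z < 0" "DERIV f z :> l" "f 0 - f t = (0 - t) * l"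
      using MVT[OF \<open>t < 0\<close>, of f] b[OF t] by blast
    then have "l \<le> c"
      using b[of z] t DERIV_unique by force
    then show ?thesis
      using z(4) \<open>t < 0\<close> assms(1) by (simp add: mult_left_mono_neg mult.commute)
  qed
  then show ?thesis
    unfolding eventually_at_left_field using \<open>b < 0\<close> by blast
qed

section \<open>Directional derivatives\<close>

lemma smooth_fun_dirderivs_differentiable:
  "smooth_fun f \<Longrightarrow> dirderivs f us differentiable (at x)"
  unfolding smooth_fun_def by blast

lemma smooth_fun_differentiable: "smooth_fun f \<Longrightarrow> f differentiable (at x)"
  using smooth_fun_dirderivs_differentiable[of f "[]"] by simp

lemma smooth_fun_continuous: "smooth_fun f \<Longrightarrow> continuous_on S f"
  by (simp add: continuous_at_imp_continuous_on differentiable_imp_continuous_within smooth_fun_differentiable)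

lemma dirderivs_along_line:
  assumes "dirderivs f us differentiable (at (q + t *\<^sub>R u))"
  shows "((\<lambda>s. dirderivs f us (q + s *\<^sub>R u)) has_real_derivative dirderivs f (u # us) (q + t *\<^sub>R u)) (at t)"
proof -
  let ?D = "frechet_derivative (dirderivs f us) (at (q + t *\<^sub>R u))"
  have "(dirderivs f us has_derivative ?D) (at (q + t *\<^sub>R u))"
    using assms frechet_derivative_works by blast
  moreover have "((\<lambda>s. q + s *\<^sub>R u) has_derivative (\<lambda>s. s *\<^sub>R u)) (at t)"
    by (auto intro!: derivative_eq_intros)
  ultimately have "((\<lambda>s. dirderivs f us (q + s *\<^sub>R u)) has_derivative (\<lambda>s. ?D (s *\<^sub>R u))) (at t)"
    using has_derivative_compose[of "\<lambda>s. q + s *\<^sub>R u"] by blast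
  moreover have "?D (s *\<^sub>R u) = ?D u * s" for s
    using linear_frechet_derivative[OF assms] by (simp add: linear_scale)
  ultimately show ?thesis
    by (simp add: has_field_derivative_def)
qed

lemma dirderivs_basis_expansion:
  fixes f :: "'a::euclidean_space \<Rightarrow> real"
  assumes "f differentiable (at x)"
  shows "dirderivs f [u] x = (\<Sum>b\<in>Basis. (u \<bullet> b) * dirderivs f [b] x)"
  using Linear_Algebra.linear_componentwise[OF linear_frechet_derivative[OF assms], of u 1] by simp

lemma dirderivs_eq_grad_inner:
  fixes f :: "'a::euclidean_space \<Rightarrow> real"
  assumes "f differentiable (at x)"
  shows "dirderivs f [u] x = grad f x \<bullet> u"
proof -
  have "grad f x \<bullet> u = (\<Sum>b\<in>Basis. dirderivs f [b] x * (b \<bullet> u))"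
    by (simp add: grad_def inner_sum_left)
  also have "\<dots> = (\<Sum>b\<in>Basis. (u \<bullet> b) * dirderivs f [b] x)"
    by (rule sum.cong) (simp_all add: inner_commute)
  also have "\<dots> = dirderivs f [u] x"
    by (rule dirderivs_basis_expansion[OF assms, symmetric])
  finally show ?thesis ..
qed

lemma second_dirderivs_basis_expansion:
  fixes f :: "'a::euclidean_space \<Rightarrow> real"
  assumes "open S" "x \<in> S" "\<And>y. y \<in> S \<Longrightarrow> f differentiable (at y)"
    and second: "\<And>b. b \<in> Basis \<Longrightarrow> dirderivs f [b] differentiable (at x)"
  shows "dirderivs f [u, u] x = (\<Sum>b\<in>Basis. (u \<bullet> b) * (\<Sum>c\<in>Basis. (u \<bullet> c) * dirderivs f [c, b] x))"
proof -
  let ?D = "\<lambda>b. frechet_derivative (dirderivs f [b]) (at x)"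
  have "((\<lambda>y. \<Sum>b\<in>Basis. (u \<bullet> b) * dirderivs f [b] y) has_derivative (\<lambda>v. \<Sum>b\<in>Basis. (u \<bullet> b) * ?D b v)) (at x)"
    using second by (intro has_derivative_sum has_derivative_mult_right frechet_derivative_works[THEN iffD1])
  then have "(dirderivs f [u] has_derivative (\<lambda>v. \<Sum>b\<in>Basis. (u \<bullet> b) * ?D b v)) (at x)"
    by (rule has_derivative_transform_within_open[OF _ assms(1,2)])
      (metis dirderivs_basis_expansion assms(3))
  then have "dirderivs f [u, u] x = (\<Sum>b\<in>Basis. (u \<bullet> b) * dirderivs f [u, b] x)"
    by (simp add: frechet_derivative_at[symmetric])
  also have "\<dots> = (\<Sum>b\<in>Basis. (u \<bullet> b) * (\<Sum>c\<in>Basis. (u \<bullet> c) * dirderivs f [c, b] x))"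
    using dirderivs_basis_expansion[OF second] by simp
  finally show ?thesis .
qed

lemma dirderivs_neg_ln_second:
  fixes \<phi> :: "'a::real_normed_vector \<Rightarrow> real"
  assumes "open S" "x \<in> S" and pos: "\<And>y. y \<in> S \<Longrightarrow> 0 < \<phi> y"
    and diff: "\<And>y. y \<in> S \<Longrightarrow> \<phi> differentiable (at y)"
    and diff2: "dirderivs \<phi> [X] differentiable (at x)"
  shows "dirderivs (\<lambda>y. - ln (\<phi> y)) [X, X] x =
    ((dirderivs \<phi> [X] x)\<^sup>2 - \<phi> x * dirderivs \<phi> [X, X] x) / (\<phi> x)\<^sup>2"
proof -
  let ?D = "\<lambda>g. frechet_derivative g (at x)"
  have first: "dirderivs (\<lambda>y. - ln (\<phi> y)) [X] y = - (dirderivs \<phi> [X] y / \<phi> y)" if "y \<in> S" for y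
  proof -
    have "((\<lambda>y. - ln (\<phi> y)) has_derivative (\<lambda>v. - (frechet_derivative \<phi> (at y) v * inverse (\<phi> y)))) (at y)"
      using diff[OF that] pos[OF that]
      by (intro has_derivative_minus has_derivative_ln frechet_derivative_works[THEN iffD1])
    then show ?thesis
      by (simp add: frechet_derivative_at[symmetric] divide_inverse)
  qed
  have "\<phi> x \<noteq> 0"
    using pos[OF assms(2)] by simp
  then have "((\<lambda>y. - (dirderivs \<phi> [X] y / \<phi> y)) has_derivative
      (\<lambda>v. - (- dirderivs \<phi> [X] x * (inverse (\<phi> x) * ?D \<phi> v * inverse (\<phi> x)) + ?D (dirderivs \<phi> [X]) v / \<phi> x))) (at x)"
    using diff[OF assms(2)] diff2
    by (intro has_derivative_minus has_derivative_divide frechet_derivative_works[THEN iffD1])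
  then have "(dirderivs (\<lambda>y. - ln (\<phi> y)) [X] has_derivative
      (\<lambda>v. - (- dirderivs \<phi> [X] x * (inverse (\<phi> x) * ?D \<phi> v * inverse (\<phi> x)) + ?D (dirderivs \<phi> [X]) v / \<phi> x))) (at x)"
    by (rule has_derivative_transform_within_open[OF _ assms(1,2)]) (metis first)
  then show ?thesis
    using \<open>\<phi> x \<noteq> 0\<close> by (simp add: frechet_derivative_at[symmetric] field_simps power2_eq_square)
qed

lemma C2_closure_extensions:
  fixes \<phi> :: "'a::euclidean_space \<Rightarrow> real"
  assumes "open \<Omega>" "C2_closure \<Omega> \<phi>"
  obtains D1 D2 :: "'a \<Rightarrow> 'a \<Rightarrow> real"
  where "continuous_on (closure \<Omega> \<times> UNIV) (\<lambda>z. D1 (fst z) (snd z))"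
    "continuous_on (closure \<Omega> \<times> UNIV) (\<lambda>z. D2 (fst z) (snd z))"
    "\<And>x. linear (D1 x)" "\<And>x c u. D2 x (c *\<^sub>R u) = c\<^sup>2 * D2 x u"
    "\<And>x u. x \<in> \<Omega> \<Longrightarrow> D1 x u = dirderivs \<phi> [u] x"
    "\<And>x u. x \<in> \<Omega> \<Longrightarrow> D2 x u = dirderivs \<phi> [u, u] x"
proof -
  have diff: "\<And>x. x \<in> \<Omega> \<Longrightarrow> \<phi> differentiable (at x)"
    and diff2: "\<And>u x. x \<in> \<Omega> \<Longrightarrow> dirderivs \<phi> [u] differentiable (at x)"
    and ext1: "\<forall>u. extends_cont \<Omega> (dirderivs \<phi> [u])"
    and ext2: "\<forall>u v. extends_cont \<Omega> (dirderivs \<phi> [u, v])"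
    using assms(2) unfolding C2_closure_def by auto
  obtain G where G: "\<And>u. continuous_on (closure \<Omega>) (G u)" "\<And>u x. x \<in> \<Omega> \<Longrightarrow> G u x = dirderivs \<phi> [u] x"
    using ext1 unfolding extends_cont_def choice_iff by blast
  obtain H where H: "\<And>u v. continuous_on (closure \<Omega>) (H u v)"
      "\<And>u v x. x \<in> \<Omega> \<Longrightarrow> H u v x = dirderivs \<phi> [u, v] x"
    using ext2 unfolding extends_cont_def choice_iff by blast
  \<comment> \<open>Extending only the derivatives along basis vectors makes the extensions jointly continuous
    in the point and the direction.\<close>
  define D1 where "D1 x u = (\<Sum>b\<in>Basis. (u \<bullet> b) * G b x)" for x u
  define D2 where "D2 x u = (\<Sum>b\<in>Basis. (u \<bullet> b) * (\<Sum>c\<in>Basis. (u \<bullet> c) * H c b x))" for x u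
  show thesis
  proof (rule that)
    show "continuous_on (closure \<Omega> \<times> UNIV) (\<lambda>z. D1 (fst z) (snd z))"
      unfolding D1_def
      by (intro continuous_intros continuous_on_compose2[OF G(1), of _ fst]) auto
    show "continuous_on (closure \<Omega> \<times> UNIV) (\<lambda>z. D2 (fst z) (snd z))"
      unfolding D2_def
      by (intro continuous_intros continuous_on_compose2[OF H(1), of _ fst]) auto
    show "linear (D1 x)" for x
      unfolding D1_def by (intro linearI) (simp_all add: inner_add_left distrib_right sum.distrib sum_distrib_left mult.assoc)
    show "D2 x (c *\<^sub>R u) = c\<^sup>2 * D2 x u" for x c u
      by (simp add: D2_def sum_distrib_left power2_eq_square mult_ac)
    show "D1 x u = dirderivs \<phi> [u] x" if "x \<in> \<Omega>" for x u
      unfolding dirderivs_basis_expansion[OF diff[OF that], of u] by (simp add: D1_def G(2)[OF that])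
    show "D2 x u = dirderivs \<phi> [u, u] x" if "x \<in> \<Omega>" for x u
      using second_dirderivs_basis_expansion[OF assms(1) that diff diff2[OF that], of u]
      by (simp only: D2_def H(2)[OF that])
  qed
qed

section \<open>Continuity and compactness\<close>

lemma open_sublevel_frontier:
  fixes \<rho> :: "'a::topological_space \<Rightarrow> real"
  assumes "continuous_on UNIV \<rho>"
  shows "open {x. \<rho> x < 0}" and "frontier {x. \<rho> x < 0} = {x \<in> closure {x. \<rho> x < 0}. \<rho> x = 0}"
proof -
  show "open {x. \<rho> x < 0}"
    using assms by (simp add: open_Collect_less)
  moreover have "closure {x. \<rho> x < 0} \<subseteq> {x. \<rho> x \<le> 0}"
    using assms by (intro closure_minimal) (auto simp: closed_Collect_le)
  ultimately show "frontier {x. \<rho> x < 0} = {x \<in> closure {x. \<rho> x < 0}. \<rho> x = 0}"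
    by (force simp: frontier_def interior_open)
qed

lemma isCont_lower_bound_ball:
  fixes g :: "'a::metric_space \<Rightarrow> real"
  assumes "isCont g p" "a < g p"
  obtains r where "0 < r" "\<And>y. dist y p < r \<Longrightarrow> a < g y"
proof -
  obtain r where "0 < r" and r: "\<And>y. dist y p < r \<Longrightarrow> dist (g y) (g p) < g p - a"
    using assms unfolding continuous_at_eps_delta by (meson diff_gt_0_iff_gt)
  have "a < g y" if "dist y p < r" for y
    using r[OF that] unfolding dist_real_def abs_less_iff by linarith
  with \<open>0 < r\<close> show thesis
    using that by blast
qed

lemma continuous_extension_limit:
  fixes g f :: "'a::topological_space \<Rightarrow> 'b::t2_space"
  assumes "continuous_on (closure S) g" "\<And>x. x \<in> S \<Longrightarrow> g x = f x"
    and "p \<in> closure S" "p \<notin> S" "(f \<longlongrightarrow> d) (at p within S)"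
  shows "g p = d"
proof (rule tendsto_unique)
  show "at p within S \<noteq> bot"
    using assms(3,4) by (simp add: trivial_limit_within closure_def)
  have "(g \<longlongrightarrow> g p) (at p within S)"
    using assms(1,3) closure_subset by (metis continuous_on_def tendsto_within_subset)
  moreover have "\<forall>\<^sub>F x in at p within S. g x = f x"
    using assms(2) by (auto simp: eventually_at_filter)
  ultimately show "(f \<longlongrightarrow> g p) (at p within S)"
    using tendsto_cong by blast
qed (rule assms(5))

lemma continuous_on_closure_le:
  fixes f :: "'a::topological_space \<Rightarrow> real"
  assumes "continuous_on (closure S) f" "\<And>x. x \<in> S \<Longrightarrow> f x \<le> c" "x \<in> closure S"
  shows "f x \<le> c"
proof -
  have "closed {x \<in> closure S. f x \<le> c}"
    using assms(1) by (intro continuous_on_closed_Collect_le continuous_on_const) auto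
  then have "closure S \<subseteq> {x \<in> closure S. f x \<le> c}"
    using assms(2) closure_subset by (intro closure_minimal) auto
  then show ?thesis
    using assms(3) by blast
qed

lemma compact_uniform_positivity:
  fixes \<phi> A B :: "'a::metric_space \<Rightarrow> real"
  assumes "compact C" "continuous_on C \<phi>" "continuous_on C A" "continuous_on C B"
    and degenerate: "\<And>z. z \<in> C \<Longrightarrow> \<phi> z = 0 \<Longrightarrow> A z = 0 \<Longrightarrow> B z < 0"
  obtains c where "0 < c" "\<And>z. z \<in> C \<Longrightarrow> 0 < \<phi> z \<Longrightarrow> \<phi> z < c \<Longrightarrow> c * \<phi> z \<le> (A z)\<^sup>2 - \<phi> z * B z"
proof (rule ccontr)
  assume "\<not> thesis"
  have "\<exists>z. z \<in> C \<and> 0 < \<phi> z \<and> \<phi> z < inverse (Suc n)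
      \<and> (A z)\<^sup>2 < \<phi> z * (B z + inverse (Suc n))" for n :: nat
  proof (rule ccontr)
    assume "\<not> ?thesis"
    then have "inverse (Suc n) * \<phi> z \<le> (A z)\<^sup>2 - \<phi> z * B z"
      if "z \<in> C" "0 < \<phi> z" "\<phi> z < inverse (Suc n)" for z
      using that by (auto simp: not_less algebra_simps)
    then show False
      using \<open>\<not> thesis\<close> that[of "inverse (Suc n)"] by simp
  qed
  then obtain z where z: "\<And>n. z n \<in> C" "\<And>n. 0 < \<phi> (z n)" "\<And>n. \<phi> (z n) < inverse (Suc n)"
    and small: "\<And>n. (A (z n))\<^sup>2 < \<phi> (z n) * (B (z n) + inverse (Suc n))"
    by metis
  obtain l r where "l \<in> C" "strict_mono r" and lim: "(z \<circ> r) \<longlonglongrightarrow> l"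
    using seq_compactE[OF compact_imp_seq_compact[OF assms(1)], of z] z(1) by blast
  have inv: "(\<lambda>n. inverse (real (Suc (r n)))) \<longlonglongrightarrow> 0"
    using LIMSEQ_subseq_LIMSEQ[OF LIMSEQ_inverse_real_of_nat \<open>strict_mono r\<close>] by (simp add: o_def)
  have lim_C: "((\<lambda>n. f (z (r n))) \<longlongrightarrow> f l) sequentially" if "continuous_on C f" for f :: "'a \<Rightarrow> real"
    using continuous_on_tendsto_compose[OF that lim \<open>l \<in> C\<close>] z(1) by (simp add: o_def)
  have "\<phi> l = 0"
  proof (rule antisym)
    show "\<phi> l \<le> 0"
      by (intro tendsto_le[OF trivial_limit_sequentially inv lim_C[OF assms(2)]]
          always_eventually allI less_imp_le z(3))
    show "0 \<le> \<phi> l"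
      by (intro tendsto_le[OF trivial_limit_sequentially lim_C[OF assms(2)] tendsto_const]
          always_eventually allI less_imp_le z(2))
  qed
  have bound_lim: "(\<lambda>n. \<phi> (z (r n)) * (B (z (r n)) + inverse (Suc (r n)))) \<longlonglongrightarrow> \<phi> l * (B l + 0)"
    by (intro tendsto_intros lim_C assms inv)
  have "(A l)\<^sup>2 \<le> \<phi> l * (B l + 0)"
    by (intro tendsto_le[OF trivial_limit_sequentially bound_lim tendsto_power[OF lim_C[OF assms(3)]]]
        always_eventually allI less_imp_le small)
  then have "A l = 0"
    using \<open>\<phi> l = 0\<close> by simp
  then have "B l + 0 < 0"
    using degenerate[OF \<open>l \<in> C\<close> \<open>\<phi> l = 0\<close>] by simp
  then have "\<forall>\<^sub>F n in sequentially. B (z (r n)) + inverse (Suc (r n)) < 0"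
    by (intro order_tendstoD(2)[OF tendsto_add[OF lim_C[OF assms(4)] inv]])
  then obtain n where "B (z (r n)) + inverse (Suc (r n)) < 0"
    by (auto simp: eventually_sequentially)
  then have "\<phi> (z (r n)) * (B (z (r n)) + inverse (Suc (r n))) < 0"
    by (rule mult_pos_neg[OF z(2)])
  then show False
    using small[of "r n"] zero_le_power2[of "A (z (r n))"] by linarith
qed

lemma quadratic_lower_bound_from_sphere:
  fixes Q :: "'a::real_normed_vector \<Rightarrow> real"
  assumes homogeneous: "\<And>c X. Q (c *\<^sub>R X) = c\<^sup>2 * Q X"
    and sphere: "\<And>X. norm X = 1 \<Longrightarrow> a \<le> Q X"
  shows "a * (norm X)\<^sup>2 \<le> Q X"
proof (cases "X = 0")
  case True
  then show ?thesis
    using homogeneous[of 0 0] by simp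
next
  case False
  then have "Q X = (norm X)\<^sup>2 * Q (X /\<^sub>R norm X)"
    using homogeneous[of "norm X" "X /\<^sub>R norm X"] by simp
  moreover have "a \<le> Q (X /\<^sub>R norm X)"
    using False by (intro sphere) simp
  ultimately show ?thesis
    using mult_right_mono[of a "Q (X /\<^sub>R norm X)" "(norm X)\<^sup>2"] by (simp add: mult.commute)
qed

section \<open>Chords of the domain near a boundary point\<close>

lemma critical_points_on_chord:
  fixes \<rho> \<phi> :: "'a::euclidean_space \<Rightarrow> real"
  assumes \<Omega>: "\<Omega> = {x. \<rho> x < 0}" and \<rho>: "smooth_fun \<rho>"
    and \<phi>_cont: "continuous_on (closure \<Omega>) \<phi>"
    and \<phi>_diff: "\<And>x. x \<in> \<Omega> \<Longrightarrow> \<phi> differentiable (at x)"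
    and \<phi>_diff2: "\<And>x. x \<in> \<Omega> \<Longrightarrow> dirderivs \<phi> [T] differentiable (at x)"
    and \<phi>_zero: "\<And>x. x \<in> closure \<Omega> \<Longrightarrow> \<rho> x = 0 \<Longrightarrow> \<phi> x = 0"
    and "0 < m" "0 < R"
    and convex: "\<And>t. \<bar>t\<bar> \<le> R \<Longrightarrow> m \<le> dirderivs \<rho> [T, T] (q + t *\<^sub>R T)"
    and \<rho>q: "\<rho> q < 0" "- (m * R\<^sup>2 / 16) \<le> \<rho> q" "\<bar>dirderivs \<rho> [T] q\<bar> \<le> m * R / 4"
    and "0 \<le> \<phi> q"
  obtains \<xi>1 \<xi>2 where "\<bar>\<xi>1\<bar> < R" "q + \<xi>1 *\<^sub>R T \<in> \<Omega>" "dirderivs \<phi> [T] (q + \<xi>1 *\<^sub>R T) = 0"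
    "\<bar>\<xi>2\<bar> < R" "q + \<xi>2 *\<^sub>R T \<in> \<Omega>" "dirderivs \<phi> [T, T] (q + \<xi>2 *\<^sub>R T) \<le> m * \<phi> q / \<rho> q"
proof -
  let ?line = "\<lambda>t. q + t *\<^sub>R T"
  note \<rho>_diff = smooth_fun_dirderivs_differentiable[OF \<rho>]
  obtain t1 t2 where t12: "-R < t1" "t1 < 0" "0 < t2" "t2 < R" "\<rho> (?line t1) = 0" "\<rho> (?line t2) = 0"
    and chord: "\<And>t. t1 < t \<Longrightarrow> t < t2 \<Longrightarrow> \<rho> (?line t) < 0"
    and product: "- (t1 * t2) * m \<le> - 2 * \<rho> q"
  proof (rule convex_chord_roots[of m R "\<lambda>t. \<rho> (?line t)" "\<lambda>t. dirderivs \<rho> [T] (?line t)" "\<lambda>t. dirderivs \<rho> [T, T] (?line t)"])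
    show "((\<lambda>t. \<rho> (?line t)) has_real_derivative dirderivs \<rho> [T] (?line t)) (at t)" for t
      using dirderivs_along_line[of \<rho> "[]", OF \<rho>_diff] by simp
    show "((\<lambda>t. dirderivs \<rho> [T] (?line t)) has_real_derivative dirderivs \<rho> [T, T] (?line t)) (at t)" for t
      using dirderivs_along_line[of \<rho> "[T]", OF \<rho>_diff] by simp
  qed (use assms in auto)
  have chord_in: "?line t \<in> \<Omega>" if "t1 < t" "t < t2" for t
    using chord[OF that] \<Omega> by simp
  have "?line ` closure {t1<..<t2} \<subseteq> closure \<Omega>"
    by (rule image_closure_subset) (auto intro!: continuous_intros chord_in closure_subset[THEN subsetD])
  then have closed_chord: "?line ` {t1..t2} \<subseteq> closure \<Omega>"
    using t12 by simp
  then have "?line t1 \<in> closure \<Omega>" "?line t2 \<in> closure \<Omega>"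
    using t12 by (auto simp: image_subset_iff)
  then have zeros: "\<phi> (?line t1) = 0" "\<phi> (?line t2) = 0"
    using \<phi>_zero t12(5,6) by auto
  have cont: "continuous_on {t1..t2} (\<lambda>t. \<phi> (?line t))"
    by (rule continuous_on_compose2[OF \<phi>_cont _ closed_chord]) (intro continuous_intros)
  have h': "((\<lambda>t. \<phi> (?line t)) has_real_derivative dirderivs \<phi> [T] (?line t)) (at t)"
    if "t1 < t" "t < t2" for t
    using dirderivs_along_line[of \<phi> "[]"] \<phi>_diff[OF chord_in[OF that]] by simp
  have h'': "((\<lambda>t. dirderivs \<phi> [T] (?line t)) has_real_derivative dirderivs \<phi> [T, T] (?line t)) (at t)"
    if "t1 < t" "t < t2" for t
    using dirderivs_along_line[of \<phi> "[T]"] \<phi>_diff2[OF chord_in[OF that]] by simp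
  obtain \<xi>2 where \<xi>2: "t1 < \<xi>2" "\<xi>2 < t2"
    and interpolation: "dirderivs \<phi> [T, T] (?line \<xi>2) * (t1 * t2) = 2 * \<phi> (?line 0)"
    by (rule linear_interpolation_error[of t1 t2 "\<lambda>t. \<phi> (?line t)"]) (use t12 cont h' h'' zeros in auto)
  have "\<exists>z. t1 < z \<and> z < t2 \<and> DERIV (\<lambda>t. \<phi> (?line t)) z :> 0"
    using h' t12 zeros cont by (intro Rolle) (auto simp: real_differentiable_def)
  then obtain \<xi>1 where \<xi>1: "t1 < \<xi>1" "\<xi>1 < t2" "dirderivs \<phi> [T] (?line \<xi>1) = 0"
    using h' DERIV_unique by blast
  have "m * \<phi> q \<le> dirderivs \<phi> [T, T] (?line \<xi>2) * \<rho> q"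
  proof -
    have "m * \<phi> q * (- (t1 * t2)) \<le> - 2 * \<rho> q * \<phi> q"
      using mult_right_mono[OF product \<open>0 \<le> \<phi> q\<close>] by (simp add: algebra_simps)
    also have "\<dots> = dirderivs \<phi> [T, T] (?line \<xi>2) * \<rho> q * (- (t1 * t2))"
      using interpolation by (simp add: algebra_simps)
    finally show ?thesis
      using t12 by (simp add: mult_neg_pos)
  qed
  then have "dirderivs \<phi> [T, T] (?line \<xi>2) \<le> m * \<phi> q / \<rho> q"
    using \<rho>q(1) by (simp add: le_divide_eq)
  then show thesis
    using that[of \<xi>1 \<xi>2] \<xi>1 \<xi>2 t12 chord_in by (simp add: abs_less_iff)
qed

lemma inward_normal_sublevel:
  fixes \<rho> :: "'a::real_normed_vector \<Rightarrow> real"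
  assumes \<rho>: "smooth_fun \<rho>" and "\<rho> p = 0" and \<nu>: "0 < dirderivs \<rho> [\<nu>] p"
  shows "\<forall>\<^sub>F t in at_left 0. 2 * dirderivs \<rho> [\<nu>] p * t \<le> \<rho> (p + t *\<^sub>R \<nu>) \<and> \<rho> (p + t *\<^sub>R \<nu>) < 0"
proof -
  let ?line = "\<lambda>t. p + t *\<^sub>R \<nu>"
  define \<gamma> where "\<gamma> = dirderivs \<rho> [\<nu>] p"
  have "0 < \<gamma>"
    using \<nu> by (simp add: \<gamma>_def)
  note \<rho>_diff = smooth_fun_dirderivs_differentiable[OF \<rho>]
  have \<rho>_line: "((\<lambda>t. \<rho> (?line t)) has_real_derivative dirderivs \<rho> [\<nu>] (?line t)) (at t)" for t
    using dirderivs_along_line[of \<rho> "[]", OF \<rho>_diff] by simp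
  have \<rho>_cont: "continuous_on S (\<lambda>t. \<rho> (?line t))" for S
    using \<rho>_line DERIV_isCont by (blast intro: continuous_at_imp_continuous_on)
  have "(?line \<longlongrightarrow> p) (at_left 0)"
    by (auto intro!: tendsto_eq_intros)
  then have "((\<lambda>t. dirderivs \<rho> [\<nu>] (?line t)) \<longlongrightarrow> \<gamma>) (at_left 0)"
    unfolding \<gamma>_def by (rule isCont_tendsto_compose[OF differentiable_imp_continuous_within[OF \<rho>_diff]])
  then have "\<forall>\<^sub>F t in at_left 0. \<gamma> / 2 < dirderivs \<rho> [\<nu>] (?line t) \<and> dirderivs \<rho> [\<nu>] (?line t) < 2 * \<gamma>"
    by (intro eventually_conj order_tendstoD) (use \<open>0 < \<gamma>\<close> in auto)
  then have "\<forall>\<^sub>F t in at_left 0. 2 * \<gamma> * t \<le> \<rho> (?line t) \<and> - (\<gamma> / 2) * t \<le> - \<rho> (?line t)"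
    using \<open>\<rho> p = 0\<close> \<rho>_line \<rho>_cont
    by (intro eventually_conj eventually_at_left_mvt_lower_bound[where f' = "\<lambda>t. dirderivs \<rho> [\<nu>] (?line t)"]
        eventually_at_left_mvt_lower_bound[where f' = "\<lambda>t. - dirderivs \<rho> [\<nu>] (?line t)"])
      (auto elim!: eventually_mono intro!: continuous_on_minus DERIV_minus)
  moreover have "\<forall>\<^sub>F t in at_left (0::real). t < 0"
    by (simp add: eventually_at_filter)
  ultimately show ?thesis
    unfolding \<gamma>_def[symmetric]
  proof eventually_elim
    case (elim t)
    then show ?case
      using mult_pos_neg[OF \<open>0 < \<gamma>\<close> \<open>t < 0\<close>] by linarith
  qed
qed

lemma inward_normal_lower_bound:
  fixes \<phi> :: "'a::real_normed_vector \<Rightarrow> real"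
  assumes \<phi>_cont: "continuous_on (closure \<Omega>) \<phi>"
    and \<phi>_diff: "\<And>x. x \<in> \<Omega> \<Longrightarrow> \<phi> differentiable (at x)"
    and "\<phi> p = 0" "p \<notin> \<Omega>"
    and inside: "\<forall>\<^sub>F t in at_left 0. p + t *\<^sub>R \<nu> \<in> \<Omega>"
    and normal: "((\<lambda>x. dirderivs \<phi> [\<nu>] x) \<longlongrightarrow> d) (at p within \<Omega>)" and "d < c"
  shows "\<forall>\<^sub>F t in at_left 0. c * t \<le> \<phi> (p + t *\<^sub>R \<nu>)"
proof -
  let ?line = "\<lambda>t. p + t *\<^sub>R \<nu>"
  have line: "(?line \<longlongrightarrow> p) (at_left 0)"
    by (auto intro!: tendsto_eq_intros)
  have "p \<in> closure \<Omega>"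
    using inside by (intro Lim_in_closed_set[OF closed_closure _ _ line])
      (auto elim!: eventually_mono intro: closure_subset[THEN subsetD])
  have "filterlim ?line (at p within \<Omega>) (at_left 0)"
    using inside \<open>p \<notin> \<Omega>\<close> unfolding filterlim_at by (auto elim!: eventually_mono intro: line)
  then have "((\<lambda>t. dirderivs \<phi> [\<nu>] (?line t)) \<longlongrightarrow> d) (at_left 0)"
    by (rule filterlim_compose[OF normal])
  then have "\<forall>\<^sub>F t in at_left 0. dirderivs \<phi> [\<nu>] (?line t) < c"
    using \<open>d < c\<close> by (intro order_tendstoD)
  moreover have "\<forall>\<^sub>F t in at_left 0. \<forall>s. t \<le> s \<longrightarrow> s < 0 \<longrightarrow> ?line s \<in> \<Omega>"
    using inside by (rule eventually_at_left_all_between)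
  moreover have "\<forall>\<^sub>F t in at_left (0::real). t < 0"
    by (simp add: eventually_at_filter)
  ultimately have "\<forall>\<^sub>F t in at_left 0. continuous_on {t..0} (\<lambda>t. \<phi> (?line t))
      \<and> ((\<lambda>t. \<phi> (?line t)) has_real_derivative dirderivs \<phi> [\<nu>] (?line t)) (at t)
      \<and> dirderivs \<phi> [\<nu>] (?line t) \<le> c"
  proof eventually_elim
    case (elim t)
    have "?line s \<in> closure \<Omega>" if "t \<le> s" "s \<le> 0" for s
    proof (cases "s = 0")
      case False
      then show ?thesis
        using elim that closure_subset by fastforce
    qed (use \<open>p \<in> closure \<Omega>\<close> in simp)
    then have "continuous_on {t..0} (\<lambda>t. \<phi> (?line t))"
      by (intro continuous_on_compose2[OF \<phi>_cont] continuous_intros) auto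
    moreover have "((\<lambda>t. \<phi> (?line t)) has_real_derivative dirderivs \<phi> [\<nu>] (?line t)) (at t)"
      using dirderivs_along_line[of \<phi> "[]"] \<phi>_diff elim by simp
    ultimately show ?case
      using elim by simp
  qed
  then show ?thesis
    using \<open>\<phi> p = 0\<close> by (intro eventually_at_left_mvt_lower_bound) simp_all
qed

lemma inward_normal_estimates:
  fixes \<rho> \<phi> :: "'a::real_normed_vector \<Rightarrow> real"
  assumes \<Omega>: "\<Omega> = {x. \<rho> x < 0}" and \<rho>: "smooth_fun \<rho>"
    and \<phi>_cont: "continuous_on (closure \<Omega>) \<phi>"
    and \<phi>_diff: "\<And>x. x \<in> \<Omega> \<Longrightarrow> \<phi> differentiable (at x)"
    and \<phi>_zero: "\<And>x. x \<in> closure \<Omega> \<Longrightarrow> \<rho> x = 0 \<Longrightarrow> \<phi> x = 0"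
    and p: "\<rho> p = 0" "p \<in> closure \<Omega>" and \<nu>: "0 < dirderivs \<rho> [\<nu>] p"
    and d: "d < 0" "((\<lambda>x. dirderivs \<phi> [\<nu>] x) \<longlongrightarrow> d) (at p within \<Omega>)"
  shows "\<forall>\<^sub>F t in at_left 0. p + t *\<^sub>R \<nu> \<in> \<Omega>
    \<and> 2 * dirderivs \<rho> [\<nu>] p * t \<le> \<rho> (p + t *\<^sub>R \<nu>) \<and> d / 2 * t \<le> \<phi> (p + t *\<^sub>R \<nu>)"
proof -
  have sublevel: "\<forall>\<^sub>F t in at_left 0. 2 * dirderivs \<rho> [\<nu>] p * t \<le> \<rho> (p + t *\<^sub>R \<nu>) \<and> \<rho> (p + t *\<^sub>R \<nu>) < 0"
    by (rule inward_normal_sublevel[OF \<rho> p(1) \<nu>])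
  then have inside: "\<forall>\<^sub>F t in at_left 0. p + t *\<^sub>R \<nu> \<in> \<Omega>"
    by eventually_elim (simp add: \<Omega>)
  have "\<forall>\<^sub>F t in at_left 0. d / 2 * t \<le> \<phi> (p + t *\<^sub>R \<nu>)"
    using d(1) \<Omega> p \<phi>_zero[OF p(2,1)]
    by (intro inward_normal_lower_bound[OF \<phi>_cont \<phi>_diff _ _ inside d(2)]) auto
  with sublevel inside show ?thesis
    by eventually_elim simp
qed

lemma tangential_chords_near_boundary:
  fixes \<rho> \<phi> :: "'a::euclidean_space \<Rightarrow> real"
  assumes \<Omega>: "\<Omega> = {x. \<rho> x < 0}" and \<rho>: "smooth_fun \<rho>"
    and \<phi>_cont: "continuous_on (closure \<Omega>) \<phi>"
    and \<phi>_diff: "\<And>x. x \<in> \<Omega> \<Longrightarrow> \<phi> differentiable (at x)"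
    and \<phi>_diff2: "\<And>x. x \<in> \<Omega> \<Longrightarrow> dirderivs \<phi> [T] differentiable (at x)"
    and \<phi>_zero: "\<And>x. x \<in> closure \<Omega> \<Longrightarrow> \<rho> x = 0 \<Longrightarrow> \<phi> x = 0"
    and p: "\<rho> p = 0" and p_closure: "p \<in> closure \<Omega>"
    and \<nu>: "norm \<nu> = 1" "0 < dirderivs \<rho> [\<nu>] p"
    and d: "d < 0" "((\<lambda>x. dirderivs \<phi> [\<nu>] x) \<longlongrightarrow> d) (at p within \<Omega>)"
    and T: "T \<noteq> 0" "dirderivs \<rho> [T] p = 0" "0 < dirderivs \<rho> [T, T] p"
  shows "p \<in> closure {y \<in> \<Omega>. dirderivs \<phi> [T] y = 0}"
    and "\<exists>\<kappa>>0. p \<in> closure {y \<in> \<Omega>. dirderivs \<phi> [T, T] y \<le> - \<kappa>}"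
proof -
  define \<gamma> where "\<gamma> = dirderivs \<rho> [\<nu>] p"
  define m where "m = dirderivs \<rho> [T, T] p / 2"
  define \<kappa> where "\<kappa> = - d * m / (4 * \<gamma>)"
  have "0 < \<gamma>" "0 < m"
    using \<nu> T by (simp_all add: \<gamma>_def m_def)
  then have "0 < \<kappa>"
    unfolding \<kappa>_def using d(1) by (intro divide_pos_pos mult_pos_pos) auto
  have \<rho>_cont: "isCont (dirderivs \<rho> us) x" for us x
    using differentiable_imp_continuous_within smooth_fun_dirderivs_differentiable[OF \<rho>] by blast
  have "m < dirderivs \<rho> [T, T] p"
    using \<open>0 < m\<close> by (simp add: m_def)
  then obtain r where "0 < r" and convex: "\<And>y. dist y p < r \<Longrightarrow> m \<le> dirderivs \<rho> [T, T] y"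
    using isCont_lower_bound_ball[OF \<rho>_cont] by (metis less_imp_le)
  have normal: "\<forall>\<^sub>F t in at_left 0. p + t *\<^sub>R \<nu> \<in> \<Omega>
      \<and> 2 * \<gamma> * t \<le> \<rho> (p + t *\<^sub>R \<nu>) \<and> d / 2 * t \<le> \<phi> (p + t *\<^sub>R \<nu>)"
    unfolding \<gamma>_def by (rule inward_normal_estimates[OF \<Omega> \<rho> \<phi>_cont \<phi>_diff \<phi>_zero p p_closure \<nu>(2) d])
  have "((\<lambda>t. p + t *\<^sub>R \<nu>) \<longlongrightarrow> p) (at_left 0)"
    by (auto intro!: tendsto_eq_intros)
  from isCont_tendsto_compose[OF \<rho>_cont[where us = "[T]"] this]
  have tangential: "((\<lambda>t. dirderivs \<rho> [T] (p + t *\<^sub>R \<nu>)) \<longlongrightarrow> 0) (at_left 0)"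
    using T(2) by simp
  have depth: "\<forall>\<^sub>F t in at_left 0. \<bar>dirderivs \<rho> [T] (p + t *\<^sub>R \<nu>)\<bar> < \<epsilon> \<and> t \<in> {- c<..<0}"
    if "0 < \<epsilon>" "0 < c" for \<epsilon> c
  proof -
    have "\<forall>\<^sub>F t in at_left (0::real). t \<in> {- c<..<0}"
      using that(2) by (intro eventually_at_left_real) simp
    with tendstoD[OF tangential that(1)] show ?thesis
      by eventually_elim simp
  qed
  have chords: "\<exists>y1\<in>\<Omega>. \<exists>y2\<in>\<Omega>. dist y1 p < e \<and> dist y2 p < e
      \<and> dirderivs \<phi> [T] y1 = 0 \<and> dirderivs \<phi> [T, T] y2 \<le> - \<kappa>" if "0 < e" for e
  proof -
    define R where "R = min r e / (2 * norm T)"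
    have "0 < R" and RT: "R * norm T = min r e / 2"
      using \<open>0 < r\<close> \<open>0 < e\<close> T(1) by (simp_all add: R_def)
    have pos: "0 < m * R / 4" "0 < min (R * norm T) (m * R\<^sup>2 / (32 * \<gamma>))"
      using \<open>0 < m\<close> \<open>0 < R\<close> \<open>0 < \<gamma>\<close> T(1) by simp_all
    obtain t0 where DTq: "\<bar>dirderivs \<rho> [T] (p + t0 *\<^sub>R \<nu>)\<bar> < m * R / 4"
      and t0: "- (R * norm T) < t0" "- (m * R\<^sup>2 / (32 * \<gamma>)) < t0" "t0 < 0"
      and q: "p + t0 *\<^sub>R \<nu> \<in> \<Omega>" "2 * \<gamma> * t0 \<le> \<rho> (p + t0 *\<^sub>R \<nu>)" "d / 2 * t0 \<le> \<phi> (p + t0 *\<^sub>R \<nu>)"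
      using eventually_happens[OF eventually_conj[OF depth[OF pos] normal]] by (auto simp: minus_min_eq_max)
    have "- (m * R\<^sup>2 / 16) < 2 * \<gamma> * t0"
      using t0(2) \<open>0 < \<gamma>\<close> by (simp add: field_simps)
    define q where "q = p + t0 *\<^sub>R \<nu>"
    have near: "dist (q + t *\<^sub>R T) p < min r e" if "\<bar>t\<bar> \<le> R" for t
    proof -
      have "dist (q + t *\<^sub>R T) p \<le> norm (t0 *\<^sub>R \<nu>) + norm (t *\<^sub>R T)"
        using norm_triangle_ineq[of "t0 *\<^sub>R \<nu>" "t *\<^sub>R T"] by (simp add: q_def dist_norm)
      also have "\<dots> \<le> - t0 + R * norm T"
        using that t0(3) \<nu>(1) by (simp add: mult_right_mono)
      finally show ?thesis
        using RT t0(1) by linarith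
    qed
    have "0 \<le> \<phi> q"
      using q(3) mult_neg_neg[of "d / 2" t0] t0(3) d(1) unfolding q_def by linarith
    obtain \<xi>1 \<xi>2 where "q + \<xi>1 *\<^sub>R T \<in> \<Omega>" "dirderivs \<phi> [T] (q + \<xi>1 *\<^sub>R T) = 0"
      "q + \<xi>2 *\<^sub>R T \<in> \<Omega>" "dirderivs \<phi> [T, T] (q + \<xi>2 *\<^sub>R T) \<le> m * \<phi> q / \<rho> q"
      and "dist (q + \<xi>1 *\<^sub>R T) p < e" "dist (q + \<xi>2 *\<^sub>R T) p < e"
    proof (rule critical_points_on_chord[OF \<Omega> \<rho> \<phi>_cont \<phi>_diff \<phi>_diff2 \<phi>_zero \<open>0 < m\<close> \<open>0 < R\<close>])
      show "m \<le> dirderivs \<rho> [T, T] (q + t *\<^sub>R T)" if "\<bar>t\<bar> \<le> R" for t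
        using convex near[OF that] by simp
    qed (use q \<open>- (m * R\<^sup>2 / 16) < 2 * \<gamma> * t0\<close> DTq \<open>0 \<le> \<phi> q\<close> \<Omega> near in \<open>auto simp: q_def\<close>)
    \<comment> \<open>Both \<open>\<rho> q\<close> and \<open>\<phi> q\<close> are of order \<open>|t0|\<close>, so the bound from the chord is uniform in the depth.\<close>
    moreover have "m * \<phi> q / \<rho> q \<le> - \<kappa>"
    proof -
      have "- \<kappa> * \<rho> q \<le> - \<kappa> * (2 * \<gamma> * t0)"
        using q(2) \<open>0 < \<kappa>\<close> by (simp add: q_def)
      also have "\<dots> = m * (d / 2 * t0)"
        using \<open>0 < \<gamma>\<close> by (simp add: \<kappa>_def field_simps)
      also have "\<dots> \<le> m * \<phi> q"
        using q(3) \<open>0 < m\<close> by (simp add: q_def)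
      finally show ?thesis
        using q(1) \<Omega> by (simp add: q_def divide_le_eq)
    qed
    ultimately show ?thesis
      by (meson order_trans)
  qed
  show "p \<in> closure {y \<in> \<Omega>. dirderivs \<phi> [T] y = 0}"
    unfolding closure_approachable using chords by blast
  show "\<exists>\<kappa>>0. p \<in> closure {y \<in> \<Omega>. dirderivs \<phi> [T, T] y \<le> - \<kappa>}"
    unfolding closure_approachable using chords \<open>0 < \<kappa>\<close> by blast
qed

lemma boundary_tangential_concavity:
  fixes \<rho> \<phi> :: "'a::euclidean_space \<Rightarrow> real" and D1 D2 :: "'a \<Rightarrow> 'a \<Rightarrow> real"
  assumes dom: "smooth_strictly_convex_domain \<rho> \<Omega>"
    and \<phi>_cont: "continuous_on (closure \<Omega>) \<phi>"
    and \<phi>_diff: "\<And>x. x \<in> \<Omega> \<Longrightarrow> \<phi> differentiable (at x)"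
    and \<phi>_diff2: "\<And>u x. x \<in> \<Omega> \<Longrightarrow> dirderivs \<phi> [u] differentiable (at x)"
    and bdry: "\<forall>p\<in>frontier \<Omega>. \<phi> p = 0"
    and p: "p \<in> frontier \<Omega>"
    and normal: "\<exists>d<0. ((\<lambda>x. dirderivs \<phi> [outer_normal \<rho> p] x) \<longlongrightarrow> d) (at p within \<Omega>)"
    and D1: "\<And>u. continuous_on (closure \<Omega>) (\<lambda>x. D1 x u)" "linear (D1 p)"
      "\<And>x u. x \<in> \<Omega> \<Longrightarrow> D1 x u = dirderivs \<phi> [u] x"
    and D2: "\<And>u. continuous_on (closure \<Omega>) (\<lambda>x. D2 x u)"
      "\<And>x u. x \<in> \<Omega> \<Longrightarrow> D2 x u = dirderivs \<phi> [u, u] x"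
    and X: "X \<noteq> 0" "D1 p X = 0"
  shows "D2 p X < 0"
proof -
  have \<rho>: "smooth_fun \<rho>" and \<Omega>: "\<Omega> = {x. \<rho> x < 0}"
    and grad_nonzero: "\<And>p. \<rho> p = 0 \<Longrightarrow> grad \<rho> p \<noteq> 0"
    and convex: "\<And>p X. \<rho> p = 0 \<Longrightarrow> X \<noteq> 0 \<Longrightarrow> dirderivs \<rho> [X] p = 0 \<Longrightarrow> 0 < dirderivs \<rho> [X, X] p"
    using dom unfolding smooth_strictly_convex_domain_def by auto
  note frontier = open_sublevel_frontier[OF smooth_fun_continuous[OF \<rho>], folded \<Omega>]
  have "\<rho> p = 0" "p \<in> closure \<Omega>" "p \<notin> \<Omega>"
    using p frontier(2) \<Omega> by auto
  have \<phi>_zero: "\<phi> x = 0" if "x \<in> closure \<Omega>" "\<rho> x = 0" for x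
    using bdry frontier(2) that by auto
  define \<nu> where "\<nu> = outer_normal \<rho> p"
  have "norm \<nu> = 1"
    using grad_nonzero[OF \<open>\<rho> p = 0\<close>] by (simp add: \<nu>_def outer_normal_def)
  have D\<rho>: "dirderivs \<rho> [u] p = norm (grad \<rho> p) * (\<nu> \<bullet> u)" for u
    unfolding dirderivs_eq_grad_inner[OF smooth_fun_differentiable[OF \<rho>]]
    using grad_nonzero[OF \<open>\<rho> p = 0\<close>] by (simp add: \<nu>_def outer_normal_def)
  then have "0 < dirderivs \<rho> [\<nu>] p"
    using grad_nonzero[OF \<open>\<rho> p = 0\<close>] \<open>norm \<nu> = 1\<close> by (simp add: dot_square_norm)
  obtain d where d: "d < 0" "((\<lambda>x. dirderivs \<phi> [\<nu>] x) \<longlongrightarrow> d) (at p within \<Omega>)"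
    using normal unfolding \<nu>_def by blast
  have chords: "p \<in> closure {y \<in> \<Omega>. dirderivs \<phi> [T] y = 0}"
      "\<exists>\<kappa>>0. p \<in> closure {y \<in> \<Omega>. dirderivs \<phi> [T, T] y \<le> - \<kappa>}"
    if "T \<noteq> 0" "dirderivs \<rho> [T] p = 0" for T
    using tangential_chords_near_boundary[OF \<Omega> \<rho> \<phi>_cont \<phi>_diff \<phi>_diff2[where u = T] \<phi>_zero
        \<open>\<rho> p = 0\<close> \<open>p \<in> closure \<Omega>\<close> \<open>norm \<nu> = 1\<close> \<open>0 < dirderivs \<rho> [\<nu>] p\<close> d that convex[OF \<open>\<rho> p = 0\<close> that]]
    by blast+
  have "D1 p \<nu> = d"
    using continuous_extension_limit[of \<Omega> "\<lambda>x. D1 x \<nu>"] D1(1,3) \<open>p \<in> closure \<Omega>\<close> \<open>p \<notin> \<Omega>\<close> d(2)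
    by blast
  \<comment> \<open>The gradient of \<open>\<phi>\<close> at \<open>p\<close> is normal: its tangential part vanishes since \<open>\<phi> = 0\<close> on the boundary.\<close>
  define T where "T = X - (X \<bullet> \<nu>) *\<^sub>R \<nu>"
  have "\<nu> \<bullet> \<nu> = 1"
    using \<open>norm \<nu> = 1\<close> by (simp add: dot_square_norm)
  then have T_tangent: "dirderivs \<rho> [T] p = 0"
    unfolding D\<rho> by (simp add: T_def inner_diff_right inner_commute)
  have "D1 p T = 0"
  proof (cases "T = 0")
    case False
    have "p \<in> closure {y \<in> \<Omega>. dirderivs \<phi> [T] y = 0}"
      using chords(1)[OF False T_tangent] .
    moreover have "continuous_on (closure {y \<in> \<Omega>. dirderivs \<phi> [T] y = 0}) (\<lambda>x. D1 x T)"
      by (rule continuous_on_subset[OF D1(1)]) (simp add: closure_mono)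
    ultimately show ?thesis
      by (rule continuous_constant_on_closure[rotated 2]) (simp add: D1(3))
  qed (simp add: linear_0[OF D1(2)])
  moreover have "D1 p X = D1 p T + (X \<bullet> \<nu>) * D1 p \<nu>"
    using D1(2) by (simp add: T_def linear_diff linear_scale)
  ultimately have "X \<bullet> \<nu> = 0"
    using X(2) \<open>D1 p \<nu> = d\<close> d(1) by simp
  then have X_tangent: "dirderivs \<rho> [X] p = 0"
    using T_tangent by (simp add: T_def)
  obtain \<kappa> where "0 < \<kappa>" and \<kappa>: "p \<in> closure {y \<in> \<Omega>. dirderivs \<phi> [X, X] y \<le> - \<kappa>}"
    using chords(2)[OF X(1) X_tangent] by blast
  have "D2 p X \<le> - \<kappa>"
  proof (rule continuous_on_closure_le[OF _ _ \<kappa>])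
    show "continuous_on (closure {y \<in> \<Omega>. dirderivs \<phi> [X, X] y \<le> - \<kappa>}) (\<lambda>x. D2 x X)"
      by (rule continuous_on_subset[OF D2(1)]) (simp add: closure_mono)
  qed (simp add: D2(2))
  then show ?thesis
    using \<open>0 < \<kappa>\<close> by simp
qed

lemma near_boundary_quadratic_lower_bound:
  fixes \<rho> \<phi> :: "'a::euclidean_space \<Rightarrow> real"
  assumes dom: "smooth_strictly_convex_domain \<rho> \<Omega>"
    and C2: "C2_closure \<Omega> \<phi>"
    and pos: "\<forall>x\<in>\<Omega>. \<phi> x > 0"
    and bdry: "\<forall>p\<in>frontier \<Omega>. \<phi> p = 0"
    and normal: "\<forall>p\<in>frontier \<Omega>. \<exists>d<0.
                   ((\<lambda>x. dirderivs \<phi> [outer_normal \<rho> p] x) \<longlongrightarrow> d) (at p within \<Omega>)"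
  obtains c where "0 < c" "\<And>x X. x \<in> \<Omega> \<Longrightarrow> \<phi> x < c \<Longrightarrow>
    c * \<phi> x * (norm X)\<^sup>2 \<le> (dirderivs \<phi> [X] x)\<^sup>2 - \<phi> x * dirderivs \<phi> [X, X] x"
proof -
  have \<phi>: "continuous_on (closure \<Omega>) \<phi>" "\<And>x. x \<in> \<Omega> \<Longrightarrow> \<phi> differentiable (at x)"
      "\<And>u x. x \<in> \<Omega> \<Longrightarrow> dirderivs \<phi> [u] differentiable (at x)"
    using C2 unfolding C2_closure_def by auto
  have "open \<Omega>" "compact (closure \<Omega> \<times> sphere (0::'a) 1)"
    using dom open_sublevel_frontier(1)[OF smooth_fun_continuous]
    by (auto simp: smooth_strictly_convex_domain_def compact_closure intro: compact_Times)
  obtain D1 D2 where D: "continuous_on (closure \<Omega> \<times> UNIV) (\<lambda>z. D1 (fst z) (snd z))"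
      "continuous_on (closure \<Omega> \<times> UNIV) (\<lambda>z. D2 (fst z) (snd z))"
      "\<And>x. linear (D1 x)" "\<And>x c u. D2 x (c *\<^sub>R u) = c\<^sup>2 * D2 x u"
      "\<And>x u. x \<in> \<Omega> \<Longrightarrow> D1 x u = dirderivs \<phi> [u] x" "\<And>x u. x \<in> \<Omega> \<Longrightarrow> D2 x u = dirderivs \<phi> [u, u] x"
    using C2_closure_extensions[OF \<open>open \<Omega>\<close> C2] by blast
  have D_cont: "continuous_on (closure \<Omega>) (\<lambda>x. D1 x u)" "continuous_on (closure \<Omega>) (\<lambda>x. D2 x u)" for u
    by (auto intro!: continuous_on_compose2[OF D(1), of _ "\<lambda>x. (x, u)", simplified]
        continuous_on_compose2[OF D(2), of _ "\<lambda>x. (x, u)", simplified] continuous_intros)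
  obtain c where "0 < c" and c: "\<And>z. z \<in> closure \<Omega> \<times> sphere 0 1 \<Longrightarrow> 0 < \<phi> (fst z) \<Longrightarrow> \<phi> (fst z) < c \<Longrightarrow>
      c * \<phi> (fst z) \<le> (D1 (fst z) (snd z))\<^sup>2 - \<phi> (fst z) * D2 (fst z) (snd z)"
  proof (rule compact_uniform_positivity)
    fix z :: "'a \<times> 'a" assume z: "z \<in> closure \<Omega> \<times> sphere 0 1" "\<phi> (fst z) = 0" "D1 (fst z) (snd z) = 0"
    then have "fst z \<in> frontier \<Omega>"
      using pos \<open>open \<Omega>\<close> by (auto simp: frontier_def interior_open mem_Times_iff)
    moreover have "snd z \<noteq> 0"
      using z(1) by (auto simp: mem_Times_iff)
    ultimately show "D2 (fst z) (snd z) < 0"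
      using boundary_tangential_concavity[OF dom \<phi> bdry _ bspec[OF normal] D_cont(1) D(3) D(5) D_cont(2) D(6)] z(3)
      by blast
  qed (use \<open>compact (closure \<Omega> \<times> sphere 0 1)\<close> in \<open>auto intro!: continuous_on_subset[OF D(1)]
        continuous_on_subset[OF D(2)] continuous_on_compose2[OF \<phi>(1) continuous_on_fst]\<close>)
  have "c * \<phi> x * (norm X)\<^sup>2 \<le> (D1 x X)\<^sup>2 - \<phi> x * D2 x X" if "x \<in> \<Omega>" "\<phi> x < c" for x X
    using c[of "(x, _)"] that pos closure_subset
    by (intro quadratic_lower_bound_from_sphere)
      (auto simp: D(4) linear_scale[OF D(3)] power_mult_distrib algebra_simps)
  with \<open>0 < c\<close> show thesis
    using that D(5,6) by simp
qed

theorem lemma3p1: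
  fixes \<rho> \<phi> :: "'a::euclidean_space \<Rightarrow> real" and \<Omega> :: "'a set"
  assumes dom: "smooth_strictly_convex_domain \<rho> \<Omega>"
    and C2: "C2_closure \<Omega> \<phi>"
    and pos: "\<forall>x\<in>\<Omega>. \<phi> x > 0"
    and bdry: "\<forall>p\<in>frontier \<Omega>. \<phi> p = 0"
    and normal: "\<forall>p\<in>frontier \<Omega>. \<exists>d<0.
                   ((\<lambda>x. dirderivs \<phi> [outer_normal \<rho> p] x) \<longlongrightarrow> d) (at p within \<Omega>)"
  shows "\<exists>\<delta>0>0. \<exists>c0>0. \<forall>x\<in>\<Omega>. \<forall>X. \<phi> x < \<delta>0 \<longrightarrow>
           dirderivs (\<lambda>y. - ln (\<phi> y)) [X, X] x \<ge> c0 * (norm X)\<^sup>2 / \<phi> x"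
proof -
  obtain c where "0 < c" and c: "\<And>x X. x \<in> \<Omega> \<Longrightarrow> \<phi> x < c \<Longrightarrow>
      c * \<phi> x * (norm X)\<^sup>2 \<le> (dirderivs \<phi> [X] x)\<^sup>2 - \<phi> x * dirderivs \<phi> [X, X] x"
    using near_boundary_quadratic_lower_bound[OF assms] by blast
  have "open \<Omega>"
    using dom open_sublevel_frontier(1)[OF smooth_fun_continuous] by (auto simp: smooth_strictly_convex_domain_def)
  have "c * (norm X)\<^sup>2 / \<phi> x \<le> dirderivs (\<lambda>y. - ln (\<phi> y)) [X, X] x" if "x \<in> \<Omega>" "\<phi> x < c" for x X
  proof -
    have "c * (norm X)\<^sup>2 / \<phi> x \<le> ((dirderivs \<phi> [X] x)\<^sup>2 - \<phi> x * dirderivs \<phi> [X, X] x) / (\<phi> x)\<^sup>2"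
      using c[OF that, of X] pos that(1) by (simp add: field_simps power2_eq_square)
    also have "\<dots> = dirderivs (\<lambda>y. - ln (\<phi> y)) [X, X] x"
      using C2 pos that(1) unfolding C2_closure_def
      by (intro dirderivs_neg_ln_second[OF \<open>open \<Omega>\<close>, symmetric]) auto
    finally show ?thesis .
  qed
  then show ?thesis
    using \<open>0 < c\<close> by blast
qed

end
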